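(* Let $\overline F_1=\mathrm{As}\odot\Bbbk\{\mathsf f_n\mid n\ge1\}\odot\mathrm{As}$ be the free $\mathrm{As}$-$\mathrm{As}$-bimodule on generators $\mathsf f_n$ of arity $n$, degree $1-n$, with differential $$\mathsf f_k\partial=\sum_{r+2+t=k}(-1)^t(1^{\otimes r}\otimes m\otimes1^{\otimes t})\mathsf f_{k-1}+\sum_{i+j=k,\ i,j\ge1}(-1)^j(\mathsf f_i\otimes\mathsf f_j)m,$$ where $m=m^{(2)}$. Let $p:\overline F_1\to\mathrm{As}$ be the bimodule map with $\mathsf f_1\mapsto m^{(1)}$ and $\mathsf f_n\mapsto0$ for $n\ge2$. Then $p$ is a homotopy equivalence in the dg-category of left $\mathrm{As}$-modules, with homotopy inverse the left $\mathrm{As}$-module map $\beta:\mathrm{As}\to\overline F_1$, $m^{(1)}\mapsto\mathsf f_1$; in particular $\beta p=1_{\mathrm{As}}$ and $p\beta$ is homotopic to an invertible map.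
   Context: $\Bbbk$ a commutative ring; complexes of $\Bbbk$-modules, Koszul signs. $\mathrm{As}$ is the dg-operad with $\mathrm{As}(0)=0$, $\mathrm{As}(n)=\Bbbk m^{(n)}$ ($n\ge1$, degree 0), $m^{(1)}$ the unit, $(m^{(n_1)}\otimes\dots\otimes m^{(n_k)})m^{(k)}=m^{(n_1+\dots+n_k)}$. Compositions and actions are written on the right: $(a_1\otimes\dots\otimes a_k)p$ is the left action of operad elements $a_s$ on $p$ of arity $k$; $(p_1\otimes\dots\otimes p_k)b$ is the right action; $1$ is the operad unit. As a left $\mathrm{As}$-module, $\overline F_1$ is free on the elements $(\mathsf f_{i_1}\otimes\dots\otimes\mathsf f_{i_k})m^{(k)}$, $k\ge1$, $i_s\ge1$. For a dg-operad $\mathcal O$, the dg-category of left $\mathcal O$-modules has as objects collections with an associative unital left action $\mathcal O\odot\mathcal P\to\mathcal P$, degree-$t$ morphisms $f$ are families of degree-$t$ linear maps $f(n):\mathcal P(n)\to\mathcal Q(n)$ commuting with the left action, and the differential is $f\mapsto f\partial-(-1)^{t}\partial f$. Composition is written in diagrammatic order ($\beta p$ means $\beta$ then $p$). *)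

theory Defs
  imports Main
begin

text \<open>A left As-module whose underlying collection is free over the ground ring
on a basis: bas n is the basis of arity n, dg gives the degree of a basis element,
actb as b is the basis element (m^(a_1) tensor ... tensor m^(a_n)) b (the As-action
sends basis elements to basis elements, since every As(n), n>=1, is free of rank one
on m^(n), and As(0)=0), and difb b is the differential of the basis element b,
given by its coefficient function.\<close>

record ('b, 'a) dgmod =
  bas  :: "nat \<Rightarrow> 'b set"
  dg   :: "'b \<Rightarrow> int"
  actb :: "nat list \<Rightarrow> 'b \<Rightarrow> 'b"
  difb :: "'b \<Rightarrow> 'b \<Rightarrow> 'a"

definition supp :: "('b \<Rightarrow> 'a::zero) \<Rightarrow> 'b set" where
  "supp x = {b. x b \<noteq> 0}"

definition elems :: "'b set \<Rightarrow> ('b \<Rightarrow> 'a::zero) set" where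
  "elems B = {x. finite (supp x) \<and> supp x \<subseteq> B}"

definition lin_ext :: "('b \<Rightarrow> 'c \<Rightarrow> 'a::comm_ring_1) \<Rightarrow> ('b \<Rightarrow> 'a) \<Rightarrow> ('c \<Rightarrow> 'a)" where
  "lin_ext F x = (\<lambda>c. \<Sum>b\<in>supp x. x b * F b c)"

definition lact :: "('b, 'a::comm_ring_1) dgmod \<Rightarrow> nat list \<Rightarrow> ('b \<Rightarrow> 'a) \<Rightarrow> ('b \<Rightarrow> 'a)" where
  "lact M as x = lin_ext (\<lambda>b c. if actb M as b = c then 1 else 0) x"

definition dif :: "('b, 'a::comm_ring_1) dgmod \<Rightarrow> ('b \<Rightarrow> 'a) \<Rightarrow> ('b \<Rightarrow> 'a)" where
  "dif M x = lin_ext (difb M) x"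

definition homog :: "('b, 'a::zero) dgmod \<Rightarrow> int \<Rightarrow> ('b \<Rightarrow> 'a) \<Rightarrow> bool" where
  "homog M d x \<longleftrightarrow> supp x \<subseteq> {b. dg M b = d}"

definition is_lmod_map ::
  "('b, 'a::comm_ring_1) dgmod \<Rightarrow> ('c, 'a) dgmod \<Rightarrow> int
     \<Rightarrow> (nat \<Rightarrow> ('b \<Rightarrow> 'a) \<Rightarrow> ('c \<Rightarrow> 'a)) \<Rightarrow> bool" where
  "is_lmod_map M Q t f \<longleftrightarrow>
    (\<forall>n.
      (\<forall>x\<in>elems (bas M n). f n x \<in> elems (bas Q n)) \<and>
      (\<forall>x\<in>elems (bas M n). \<forall>y\<in>elems (bas M n).
          f n (\<lambda>b. x b + y b) = (\<lambda>c. f n x c + f n y c)) \<and>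
      (\<forall>x\<in>elems (bas M n). \<forall>r. f n (\<lambda>b. r * x b) = (\<lambda>c. r * f n x c)) \<and>
      (\<forall>x\<in>elems (bas M n). \<forall>d. homog M d x \<longrightarrow> homog Q (d + t) (f n x)) \<and>
      (\<forall>as. \<forall>x\<in>elems (bas M n). length as = n \<and> (\<forall>a\<in>set as. 1 \<le> a) \<longrightarrow>
          f (sum_list as) (lact M as x) = lact Q as (f n x)))"

definition sgn_pow :: "int \<Rightarrow> 'a::comm_ring_1" where
  "sgn_pow t = (if even t then 1 else -1)"

text \<open>Differential of the hom-complex, diagrammatic order:
 D f = f\<partial> - (-1)^t \<partial>f, i.e. (f then \<partial>_Q) - (-1)^t (\<partial>_M then f).\<close>
definition dmap ::
  "('b, 'a::comm_ring_1) dgmod \<Rightarrow> ('c, 'a) dgmod \<Rightarrow> int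
     \<Rightarrow> (nat \<Rightarrow> ('b \<Rightarrow> 'a) \<Rightarrow> ('c \<Rightarrow> 'a)) \<Rightarrow> (nat \<Rightarrow> ('b \<Rightarrow> 'a) \<Rightarrow> ('c \<Rightarrow> 'a))" where
  "dmap M Q t f = (\<lambda>n x c. dif Q (f n x) c - sgn_pow t * f n (dif M x) c)"

definition closed_map ::
  "('b, 'a::comm_ring_1) dgmod \<Rightarrow> ('c, 'a) dgmod
     \<Rightarrow> (nat \<Rightarrow> ('b \<Rightarrow> 'a) \<Rightarrow> ('c \<Rightarrow> 'a)) \<Rightarrow> bool" where
  "closed_map M Q f \<longleftrightarrow> is_lmod_map M Q 0 f \<and>
     (\<forall>n. \<forall>x\<in>elems (bas M n). dmap M Q 0 f n x = (\<lambda>c. 0))"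

definition homotopic ::
  "('b, 'a::comm_ring_1) dgmod \<Rightarrow> ('c, 'a) dgmod
     \<Rightarrow> (nat \<Rightarrow> ('b \<Rightarrow> 'a) \<Rightarrow> ('c \<Rightarrow> 'a)) \<Rightarrow> (nat \<Rightarrow> ('b \<Rightarrow> 'a) \<Rightarrow> ('c \<Rightarrow> 'a)) \<Rightarrow> bool" where
  "homotopic M Q f g \<longleftrightarrow>
     (\<exists>h. is_lmod_map M Q (-1) h \<and>
        (\<forall>n. \<forall>x\<in>elems (bas M n). (\<lambda>c. f n x c - g n x c) = dmap M Q (-1) h n x))"

definition idmap :: "nat \<Rightarrow> ('b \<Rightarrow> 'a) \<Rightarrow> ('b \<Rightarrow> 'a)" where
  "idmap n x = x"

definition comp_map :: "(nat \<Rightarrow> 'x \<Rightarrow> 'y) \<Rightarrow> (nat \<Rightarrow> 'y \<Rightarrow> 'z) \<Rightarrow> nat \<Rightarrow> 'x \<Rightarrow> 'z" where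
  "comp_map f g n x = g n (f n x)"

text \<open>Basis of As(N) is m^(N) (labelled N), for N >= 1; As(0) = 0. Degree 0, zero differential.\<close>
definition AsMod :: "(nat, 'a::comm_ring_1) dgmod" where
  "AsMod = \<lparr> bas = (\<lambda>N. if 1 \<le> N then {N} else {}),
             dg = (\<lambda>_. 0),
             actb = (\<lambda>as N. sum_list as),
             difb = (\<lambda>_ _. 0) \<rparr>"

text \<open>Basis element (J, I) with J = [j_1..j_n], I = [i_1..i_k] stands for
 (m^(j_1) tensor ... tensor m^(j_n)) (f_{i_1} tensor ... tensor f_{i_k}) m^(k),
 with n = i_1 + ... + i_k; its arity is j_1 + ... + j_n and its degree is k - n.\<close>

definition F1basis :: "nat \<Rightarrow> (nat list \<times> nat list) set" where
  "F1basis N = {(J, I). (\<forall>j\<in>set J. 1 \<le> j) \<and> sum_list J = N \<and> I \<noteq> [] \<and>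
                        (\<forall>i\<in>set I. 1 \<le> i) \<and> sum_list I = length J}"

fun blocks :: "nat list \<Rightarrow> nat list \<Rightarrow> nat list" where
  "blocks as [] = []"
| "blocks as (j # J) = sum_list (take j as) # blocks (drop j as) J"

definition mergeAt :: "nat \<Rightarrow> nat list \<Rightarrow> nat list" where
  "mergeAt p J = take p J @ [J ! p + J ! Suc p] @ drop (p + 2) J"

definition splitAt :: "nat \<Rightarrow> nat \<Rightarrow> nat \<Rightarrow> nat list \<Rightarrow> nat list" where
  "splitAt s a b I = take s I @ [a, b] @ drop (Suc s) I"

text \<open>Koszul sign for applying the differential to the s-th factor (0-based) of
 (f_{i_1} tensor ... tensor f_{i_k}) m^(k): (-1)^(sum of degrees of the factors to its right).\<close>
definition eps :: "nat \<Rightarrow> nat list \<Rightarrow> 'a::comm_ring_1" where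
  "eps s I = (-1) ^ sum_list (map (\<lambda>i. i - 1) (drop (Suc s) I))"

text \<open>Differential on basis elements, obtained from
 f_k \<partial> = sum_{r+2+t=k} (-1)^t (1^r tensor m tensor 1^t) f_{k-1}
        + sum_{i+j=k, i,j>=1} (-1)^j (f_i tensor f_j) m
 by the Leibniz rule (Koszul signs) and compatibility with the As-actions.\<close>
definition F1difb :: "nat list \<times> nat list \<Rightarrow> nat list \<times> nat list \<Rightarrow> 'a::comm_ring_1" where
  "F1difb b b' = (case b of (J, I) \<Rightarrow>
     \<Sum>s<length I. eps s I *
       ((\<Sum>r<I ! s - 1. (-1) ^ (I ! s - 2 - r) *
            (if b' = (mergeAt (sum_list (take s I) + r) J, I[s := I ! s - 1]) then 1 else 0))
        + (\<Sum>a\<in>{1..<I ! s}. (-1) ^ (I ! s - a) *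
            (if b' = (J, splitAt s a (I ! s - a) I) then 1 else 0))))"

definition F1Mod :: "(nat list \<times> nat list, 'a::comm_ring_1) dgmod" where
  "F1Mod = \<lparr> bas = F1basis,
             dg = (\<lambda>(J, I). int (length I) - int (sum_list I)),
             actb = (\<lambda>as (J, I). (blocks as J, I)),
             difb = F1difb \<rparr>"

text \<open>p: the bimodule map with f_1 \<mapsto> m^(1), f_n \<mapsto> 0 (n >= 2); on the basis,
 (J, I) \<mapsto> m^(sum J) if all entries of I are 1, and 0 otherwise.\<close>
definition pmap :: "nat \<Rightarrow> (nat list \<times> nat list \<Rightarrow> 'a::comm_ring_1) \<Rightarrow> (nat \<Rightarrow> 'a)" where
  "pmap n = lin_ext (\<lambda>(J, I) N. if (\<forall>i\<in>set I. i = 1) \<and> N = sum_list J then 1 else 0)"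

text \<open>beta: the left As-module map with m^(1) \<mapsto> f_1; on the basis m^(N) \<mapsto> (m^(N)) f_1 = ([N],[1]).\<close>
definition betamap :: "nat \<Rightarrow> (nat \<Rightarrow> 'a::comm_ring_1) \<Rightarrow> (nat list \<times> nat list \<Rightarrow> 'a)" where
  "betamap n = lin_ext (\<lambda>N b. if b = ([N], [1]) then 1 else 0)"

end

theory Submission
  imports Defs
begin

text \<open>
  All modules involved are free over the ground ring on explicit
  bases (basis element (J, I) of F1-bar stands for (m^J)(f_(i_1) (x) ... (x) f_(i_k))m^(k)),
  and all maps are given on basis elements, i.e. have the form lin_ext G.

  (1) Linear algebra of finitely supported coefficient functions: lin_ext is additive,
      homogeneous and functorial.  Hence a map given on a basis is a morphism of left
      As-modules, is closed, or is homotopic to another such map as soon as the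
      corresponding identity holds on basis elements (is_lmod_map_lin_ext,
      closed_map_lin_ext, homotopic_lin_ext).
  (2) Combinatorics of F1-bar: the differential paired with a test function (dpair)
      satisfies recursion equations according to the leading factor of a basis element,
      f_1 or f_(i+2); from these, p\<partial> = 0 follows by induction on the number of inputs.
  (3) The contracting homotopy h replaces a leading f_1 (x) f_i by f_(i+1) and then
      contracts the leading f_1 into the next factor recursively.  By the same induction,
      (p followed by beta) - 1 = \<partial>h + h\<partial> on every basis element (dh_eval_F1basis).
  (4) p, beta and h are morphisms of left As-modules, p and beta are closed, beta followed
      by p is the identity of As, and p followed by beta is homotopic to the identity of
      F1-bar via h.
\<close>

section \<open>Finitely supported linear combinations\<close>

lemma lin_ext_eq_sum:
  assumes "finite A" "supp x \<subseteq> A"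
  shows "lin_ext F x c = (\<Sum>b\<in>A. x b * F b c)"
  unfolding lin_ext_def
  by (rule sum.mono_neutral_left) (use assms in \<open>auto simp: supp_def\<close>)

lemma supp_lin_ext: "supp (lin_ext F x) \<subseteq> (\<Union>b\<in>supp x. supp (F b))"
proof
  fix c assume c: "c \<in> supp (lin_ext F x)"
  show "c \<in> (\<Union>b\<in>supp x. supp (F b))"
  proof (rule ccontr)
    assume "c \<notin> (\<Union>b\<in>supp x. supp (F b))"
    hence "\<forall>b\<in>supp x. F b c = 0" by (auto simp: supp_def)
    hence "lin_ext F x c = 0" by (simp add: lin_ext_def)
    thus False using c by (simp add: supp_def)
  qed
qed

lemma finite_supp_lin_ext:
  assumes "finite (supp x)" "\<forall>b\<in>supp x. finite (supp (F b))"
  shows "finite (supp (lin_ext F x))"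
  using assms by (intro finite_subset[OF supp_lin_ext] finite_UN_I) auto

lemma lin_ext_cong: "(\<And>b. b \<in> supp x \<Longrightarrow> F b = F' b) \<Longrightarrow> lin_ext F x = lin_ext F' x"
  by (simp add: lin_ext_def)

lemma lin_ext_add:
  assumes "finite (supp x)" "finite (supp y)"
  shows "lin_ext F (\<lambda>b. x b + y b) = (\<lambda>c. lin_ext F x c + lin_ext F y c)"
proof
  fix c
  have "supp (\<lambda>b. x b + y b) \<subseteq> supp x \<union> supp y" by (auto simp: supp_def)
  thus "lin_ext F (\<lambda>b. x b + y b) c = lin_ext F x c + lin_ext F y c"
    using assms by (simp add: lin_ext_eq_sum[of "supp x \<union> supp y"] distrib_right sum.distrib)
qed

lemma lin_ext_smult:
  assumes "finite (supp x)"
  shows "lin_ext F (\<lambda>b. r * x b) = (\<lambda>c. r * lin_ext F x c)"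
proof
  fix c
  have "supp (\<lambda>b. r * x b) \<subseteq> supp x" by (auto simp: supp_def)
  thus "lin_ext F (\<lambda>b. r * x b) c = r * lin_ext F x c"
    using assms by (simp add: lin_ext_eq_sum[of "supp x"] sum_distrib_left mult.assoc)
qed

lemma lin_ext_comp:
  assumes "finite (supp x)" "\<forall>b\<in>supp x. finite (supp (F b))"
  shows "lin_ext G (lin_ext F x) = lin_ext (\<lambda>b. lin_ext G (F b)) x"
proof
  fix c
  let ?A = "\<Union>b\<in>supp x. supp (F b)"
  have fA: "finite ?A" using assms by auto
  have "lin_ext G (lin_ext F x) c = (\<Sum>b'\<in>?A. lin_ext F x b' * G b' c)"
    using fA supp_lin_ext by (rule lin_ext_eq_sum)
  also have "\<dots> = (\<Sum>b\<in>supp x. x b * (\<Sum>b'\<in>?A. F b b' * G b' c))"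
    by (simp add: lin_ext_def sum_distrib_right sum_distrib_left mult.assoc sum.swap[where A="?A"])
  also have "\<dots> = (\<Sum>b\<in>supp x. x b * lin_ext G (F b) c)"
    using fA by (intro sum.cong refl arg_cong[where f="(*) _"] lin_ext_eq_sum[symmetric]) auto
  finally show "lin_ext G (lin_ext F x) c = lin_ext (\<lambda>b. lin_ext G (F b)) x c"
    by (simp add: lin_ext_def)
qed

lemma lin_ext_delta: "lin_ext F (\<lambda>b. if b = X then 1 else (0::'a::comm_ring_1)) = F X"
proof
  fix c
  have "supp (\<lambda>b. if b = X then 1 else (0::'a)) \<subseteq> {X}" by (auto simp: supp_def)
  thus "lin_ext F (\<lambda>b. if b = X then 1 else (0::'a)) c = F X c"
    by (simp add: lin_ext_eq_sum[of "{X}"])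
qed

lemma lin_ext_delta': "lin_ext F (\<lambda>b. if X = b then 1 else 0) = F X"
  using lin_ext_delta[of F X] by (simp add: eq_commute)

lemma finite_supp_delta: "finite (supp (\<lambda>c. if X = c then 1 else (0::'a::comm_ring_1)))"
  by (rule finite_subset[of _ "{X}"]) (auto simp: supp_def)

lemma lin_ext_zero: "lin_ext F (\<lambda>b. 0) = (\<lambda>c. 0)"
  by (simp add: lin_ext_def supp_def)

lemma lin_ext_zero_fun: "lin_ext (\<lambda>b c. 0) x = (\<lambda>c. 0)"
  by (simp add: lin_ext_def)

lemma lin_ext_id:
  assumes "finite (supp x)"
  shows "lin_ext (\<lambda>b c. if c = b then 1 else 0) x = x"
proof
  fix c
  show "lin_ext (\<lambda>b c. if c = b then 1 else 0) x c = x c"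
    using assms by (cases "c \<in> supp x")
      (auto simp: lin_ext_def supp_def if_distrib sum.delta' cong: if_cong)
qed

definition fsum :: "('a::comm_ring_1 \<times> 'b) list \<Rightarrow> 'b \<Rightarrow> 'a" where
  "fsum xs = (\<lambda>c. \<Sum>(r, y)\<leftarrow>xs. r * (if c = y then 1 else 0))"

lemma supp_fsum: "supp (fsum xs) \<subseteq> snd ` set xs"
proof (induction xs)
  case Nil thus ?case by (simp add: fsum_def supp_def)
next
  case (Cons p xs) thus ?case by (cases p) (auto simp: fsum_def supp_def)
qed

lemma finite_supp_fsum: "finite (supp (fsum xs))"
  by (rule finite_subset[OF supp_fsum]) simp

lemma lin_ext_fsum: "lin_ext G (fsum xs) c = (\<Sum>(r, y)\<leftarrow>xs. r * G y c)"
proof -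
  have "(\<Sum>b\<in>A. fsum xs b * G b c) = (\<Sum>(r, y)\<leftarrow>xs. r * G y c)"
    if "finite A" "snd ` set xs \<subseteq> A" for A
    using that(2)
  proof (induction xs)
    case Nil thus ?case by (simp add: fsum_def)
  next
    case (Cons p xs)
    obtain r y where p: "p = (r, y)" by (cases p)
    have "(\<Sum>b\<in>A. fsum (p # xs) b * G b c) = (\<Sum>b\<in>A. (if b = y then r * G b c else 0) + fsum xs b * G b c)"
      by (rule sum.cong) (auto simp: fsum_def p distrib_right)
    also have "\<dots> = r * G y c + (\<Sum>b\<in>A. fsum xs b * G b c)"
      using that(1) Cons.prems p by (simp add: sum.distrib)
    finally show ?case using Cons p by simp
  qed
  thus ?thesis by (simp add: lin_ext_eq_sum[of "snd ` set xs"] supp_fsum)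
qed

lemma fsum_map_snd:
  "(\<Sum>(r, y)\<leftarrow>map (\<lambda>(r, y). (r, Z y)) xs. r * \<phi> y) = (\<Sum>(r, y)\<leftarrow>xs. r * (\<phi> (Z y) :: 'a::comm_ring_1))"
  by (induction xs) auto

lemma is_lmod_map_lin_ext:
  fixes M :: "('b, 'a::comm_ring_1) dgmod" and Q :: "('c, 'a) dgmod"
  assumes fin: "\<And>n b. b \<in> bas M n \<Longrightarrow> finite (supp (G b))"
    and sub: "\<And>n b. b \<in> bas M n \<Longrightarrow> supp (G b) \<subseteq> bas Q n"
    and deg: "\<And>n b. b \<in> bas M n \<Longrightarrow> supp (G b) \<subseteq> {c. dg Q c = dg M b + t}"
    and act: "\<And>n as b. b \<in> bas M n \<Longrightarrow> length as = n \<Longrightarrow> (\<forall>a\<in>set as. 1 \<le> a) \<Longrightarrow>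
                G (actb M as b) = lact Q as (G b)"
  shows "is_lmod_map M Q t (\<lambda>n. lin_ext G)"
  unfolding is_lmod_map_def
proof (intro allI conjI ballI impI)
  fix n and x :: "'b \<Rightarrow> 'a" assume x: "x \<in> elems (bas M n)"
  hence fx: "finite (supp x)" and sx: "supp x \<subseteq> bas M n" by (auto simp: elems_def)
  have fG: "\<forall>b\<in>supp x. finite (supp (G b))" using fin sx by blast
  show "lin_ext G x \<in> elems (bas Q n)"
    unfolding elems_def using finite_supp_lin_ext[OF fx fG] supp_lin_ext[of G x] sub sx by blast
  show "\<And>r. lin_ext G (\<lambda>b. r * x b) = (\<lambda>c. r * lin_ext G x c)"
    by (rule lin_ext_smult[OF fx])
  show "lin_ext G (\<lambda>b. x b + y b) = (\<lambda>c. lin_ext G x c + lin_ext G y c)"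
    if "y \<in> elems (bas M n)" for y
    using that by (intro lin_ext_add[OF fx]) (auto simp: elems_def)
  show "homog Q (d + t) (lin_ext G x)" if "homog M d x" for d
    using that supp_lin_ext[of G x] deg sx unfolding homog_def by fastforce
  show "lin_ext G (lact M as x) = lact Q as (lin_ext G x)"
    if h: "length as = n \<and> (\<forall>a\<in>set as. 1 \<le> a)" for as
  proof -
    have "lin_ext G (lact M as x) = lin_ext (\<lambda>b. lin_ext G (\<lambda>c. if actb M as b = c then 1 else 0)) x"
      unfolding lact_def by (rule lin_ext_comp) (use fx finite_supp_delta in auto)
    also have "\<dots> = lin_ext (\<lambda>b. lact Q as (G b)) x"
      using act h sx by (intro lin_ext_cong) (auto simp: lin_ext_delta')
    also have "\<dots> = lact Q as (lin_ext G x)"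
      unfolding lact_def by (rule lin_ext_comp[symmetric, OF fx fG])
    finally show ?thesis .
  qed
qed

lemma dmap_lin_ext:
  assumes fx: "finite (supp x)"
    and fG: "\<forall>b\<in>supp x. finite (supp (G b))"
    and fd: "\<forall>b\<in>supp x. finite (supp (difb M b))"
  shows "dmap M Q t (\<lambda>n. lin_ext G) n x =
         lin_ext (\<lambda>b c. lin_ext (difb Q) (G b) c - sgn_pow t * lin_ext G (difb M b) c) x"
proof
  fix c
  have "dmap M Q t (\<lambda>n. lin_ext G) n x c =
        lin_ext (\<lambda>b. lin_ext (difb Q) (G b)) x c - sgn_pow t * lin_ext (\<lambda>b. lin_ext G (difb M b)) x c"
    by (simp add: dmap_def dif_def lin_ext_comp[OF fx fG] lin_ext_comp[OF fx fd])
  also have "\<dots> = lin_ext (\<lambda>b c. lin_ext (difb Q) (G b) c - sgn_pow t * lin_ext G (difb M b) c) x c"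
    by (simp add: lin_ext_def sum_subtractf sum_distrib_left right_diff_distrib mult.left_commute)
  finally show "dmap M Q t (\<lambda>n. lin_ext G) n x c = \<dots>" .
qed

lemma closed_map_lin_ext:
  fixes M :: "('b, 'a::comm_ring_1) dgmod" and Q :: "('c, 'a) dgmod"
  assumes lmod: "is_lmod_map M Q 0 (\<lambda>n. lin_ext G)"
    and fG: "\<And>n b. b \<in> bas M n \<Longrightarrow> finite (supp (G b))"
    and fd: "\<And>n b. b \<in> bas M n \<Longrightarrow> finite (supp (difb M b))"
    and chain: "\<And>n b. b \<in> bas M n \<Longrightarrow> lin_ext (difb Q) (G b) = lin_ext G (difb M b)"
  shows "closed_map M Q (\<lambda>n. lin_ext G)"
  unfolding closed_map_def
proof (intro conjI lmod allI ballI)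
  fix n and x :: "'b \<Rightarrow> 'a" assume "x \<in> elems (bas M n)"
  hence fx: "finite (supp x)" and sx: "supp x \<subseteq> bas M n" by (auto simp: elems_def)
  have "dmap M Q 0 (\<lambda>n. lin_ext G) n x = lin_ext (\<lambda>b c. 0) x"
    using sx fG fd chain by (subst dmap_lin_ext[OF fx]) (auto intro!: lin_ext_cong simp: sgn_pow_def)
  thus "dmap M Q 0 (\<lambda>n. lin_ext G) n x = (\<lambda>c. 0)" by (simp add: lin_ext_zero_fun)
qed

lemma homotopic_lin_ext:
  fixes M :: "('b, 'a::comm_ring_1) dgmod" and Q :: "('c, 'a) dgmod"
  assumes lmod: "is_lmod_map M Q (-1) (\<lambda>n. lin_ext H)"
    and fH: "\<And>n b. b \<in> bas M n \<Longrightarrow> finite (supp (H b))"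
    and fd: "\<And>n b. b \<in> bas M n \<Longrightarrow> finite (supp (difb M b))"
    and f_eq: "\<And>n x. x \<in> elems (bas M n) \<Longrightarrow> f n x = lin_ext A x"
    and g_eq: "\<And>n x. x \<in> elems (bas M n) \<Longrightarrow> g n x = lin_ext B x"
    and htpy: "\<And>n b c. b \<in> bas M n \<Longrightarrow>
                 A b c - B b c = lin_ext (difb Q) (H b) c + lin_ext H (difb M b) c"
  shows "homotopic M Q f g"
  unfolding homotopic_def
proof (intro exI[of _ "\<lambda>n. lin_ext H"] conjI lmod allI ballI)
  fix n and x :: "'b \<Rightarrow> 'a" assume x: "x \<in> elems (bas M n)"
  hence fx: "finite (supp x)" and sx: "supp x \<subseteq> bas M n" by (auto simp: elems_def)
  have "dmap M Q (-1) (\<lambda>n. lin_ext H) n x = lin_ext (\<lambda>b c. A b c - B b c) x"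
    using sx fH fd htpy by (subst dmap_lin_ext[OF fx]) (auto intro!: lin_ext_cong simp: sgn_pow_def)
  also have "\<dots> = (\<lambda>c. lin_ext A x c - lin_ext B x c)"
    by (simp add: lin_ext_def fun_eq_iff sum_subtractf right_diff_distrib)
  finally show "(\<lambda>c. f n x c - g n x c) = dmap M Q (-1) (\<lambda>n. lin_ext H) n x"
    using f_eq[OF x] g_eq[OF x] by simp
qed

section \<open>The differential of F1-bar evaluated against test functions\<close>

text \<open>dpair g b is the pairing of \<partial>b with a test function g, i.e. the sum of g over the
  terms of \<partial>b weighted by their coefficients; dterms b contains all terms of \<partial>b.
  All recursion equations for the differential are stated in this dual form.\<close>
definition dpair :: "(nat list \<times> nat list \<Rightarrow> 'a::comm_ring_1) \<Rightarrow> nat list \<times> nat list \<Rightarrow> 'a" where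
  "dpair g b = (case b of (J, I) \<Rightarrow>
     \<Sum>s<length I. eps s I *
       ((\<Sum>r<I ! s - 1. (-1) ^ (I ! s - 2 - r) *
            g (mergeAt (sum_list (take s I) + r) J, I[s := I ! s - 1]))
        + (\<Sum>a\<in>{1..<I ! s}. (-1) ^ (I ! s - a) *
            g (J, splitAt s a (I ! s - a) I))))"

definition dterms :: "nat list \<times> nat list \<Rightarrow> (nat list \<times> nat list) set" where
  "dterms b = (case b of (J, I) \<Rightarrow>
     \<Union>s\<in>{..<length I}. ((\<lambda>r. (mergeAt (sum_list (take s I) + r) J, I[s := I ! s - 1])) ` {..<I ! s - 1})
        \<union> ((\<lambda>a. (J, splitAt s a (I ! s - a) I)) ` {1..<I ! s}))"

lemma F1difb_dpair: "F1difb b b' = dpair (\<lambda>y. if b' = y then 1 else 0) b"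
  by (cases b) (simp add: F1difb_def dpair_def)

lemma finite_dterms: "finite (dterms b)"
  by (cases b) (simp add: dterms_def)

lemma dpair_cong:
  assumes "\<And>y. y \<in> dterms b \<Longrightarrow> g y = g' y"
  shows "dpair g b = dpair g' b"
proof -
  obtain J I where b: "b = (J, I)" by (cases b)
  show ?thesis
    unfolding b dpair_def prod.case
    by (intro sum.cong refl arg_cong2[where f="(+)"] arg_cong2[where f="(*)"] assms)
      (force simp: b dterms_def)+
qed

lemma dpair_add: "dpair (\<lambda>y. f y + g y) b = dpair f b + dpair g b"
  by (cases b) (simp add: dpair_def sum.distrib algebra_simps)

lemma dpair_cmult: "dpair (\<lambda>y. r * f y) b = r * dpair f b"
  by (cases b) (simp add: dpair_def sum_distrib_left algebra_simps)

lemma dpair_multr: "dpair (\<lambda>y. f y * r) b = dpair f b * r"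
  using dpair_cmult[of r f b] by (simp add: mult.commute)

lemma dpair_zero: "dpair (\<lambda>y. 0) b = 0"
  by (cases b) (simp add: dpair_def)

lemma dpair_sum: "finite A \<Longrightarrow> dpair (\<lambda>y. \<Sum>t\<in>A. f t y) b = (\<Sum>t\<in>A. dpair (f t) b)"
  by (induction A rule: finite_induct) (simp_all add: dpair_zero dpair_add)

lemma supp_F1difb: "supp (F1difb b :: _ \<Rightarrow> 'a::comm_ring_1) \<subseteq> dterms b"
proof
  fix b' assume b': "b' \<in> supp (F1difb b :: _ \<Rightarrow> 'a)"
  show "b' \<in> dterms b"
  proof (rule ccontr)
    assume "b' \<notin> dterms b"
    hence "dpair (\<lambda>y. if b' = y then 1 else (0::'a)) b = dpair (\<lambda>y. 0) b"
      by (intro dpair_cong) auto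
    thus False using b' by (simp add: supp_def F1difb_dpair dpair_zero)
  qed
qed

lemma finite_supp_F1difb: "finite (supp (F1difb b))"
  by (rule finite_subset[OF supp_F1difb finite_dterms])

lemma lin_ext_F1difb: "lin_ext G (F1difb b) c = dpair (\<lambda>y. G y c) b"
proof -
  have "lin_ext G (F1difb b) c = (\<Sum>b'\<in>dterms b. F1difb b b' * G b' c)"
    by (rule lin_ext_eq_sum[OF finite_dterms supp_F1difb])
  also have "\<dots> = (\<Sum>b'\<in>dterms b. dpair (\<lambda>y. (if b' = y then 1 else 0) * G b' c) b)"
    by (simp add: F1difb_dpair dpair_multr)
  also have "\<dots> = dpair (\<lambda>y. \<Sum>b'\<in>dterms b. (if b' = y then 1 else 0) * G b' c) b"
    by (simp add: dpair_sum finite_dterms)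
  also have "\<dots> = dpair (\<lambda>y. G y c) b"
    by (rule dpair_cong) (simp add: finite_dterms sum.delta if_distrib[where f="\<lambda>r. r * _"] cong: if_cong)
  finally show ?thesis .
qed

text \<open>Operations on basis elements (J, I) used to decompose them by their leading factor:
  absorb j merges an extra input arity j into the first input, widen j prepends an input
  to the first factor (f_i becomes f_(i+1)), and cons_f1 j prepends a factor f_1 with
  input m^(j).\<close>
fun add_hd :: "nat \<Rightarrow> nat list \<Rightarrow> nat list" where
  "add_hd j [] = [j]"
| "add_hd j (y # ys) = (j + y) # ys"

fun incr_hd :: "nat list \<Rightarrow> nat list" where
  "incr_hd [] = []"
| "incr_hd (i # I) = Suc i # I"

definition absorb :: "nat \<Rightarrow> nat list \<times> nat list \<Rightarrow> nat list \<times> nat list" where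
  "absorb j b = (add_hd j (fst b), snd b)"

definition widen :: "nat \<Rightarrow> nat list \<times> nat list \<Rightarrow> nat list \<times> nat list" where
  "widen j b = (j # fst b, incr_hd (snd b))"

definition cons_f1 :: "nat \<Rightarrow> nat list \<times> nat list \<Rightarrow> nat list \<times> nat list" where
  "cons_f1 j b = (j # fst b, Suc 0 # snd b)"

text \<open>The sign (-1)^(-degree) of a list of factors f_(i_1) ... f_(i_k).\<close>
definition dsign :: "nat list \<Rightarrow> 'a::comm_ring_1" where
  "dsign I = (-1) ^ sum_list (map (\<lambda>i. i - 1) I)"

lemma dsign_sq: "dsign I * dsign I = (1::'a::comm_ring_1)"
  by (simp add: dsign_def power_mult_distrib[symmetric])

lemma mergeAt_Cons0: "mergeAt 0 (x # y # xs) = (x + y) # xs"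
  by (simp add: mergeAt_def)

lemma mergeAt_Suc: "mergeAt (Suc p) (x # xs) = x # mergeAt p xs"
  by (simp add: mergeAt_def)

lemma mergeAt_add_hd: "mergeAt p ((j + k) # J) = add_hd j (mergeAt p (k # J))"
  by (cases p) (simp_all add: mergeAt_def)

lemma splitAt_Suc: "splitAt (Suc s) a b (x # xs) = x # splitAt s a b xs"
  by (simp add: splitAt_def)

lemma splitAt_0: "splitAt 0 a b (x # xs) = a # b # xs"
  by (simp add: splitAt_def)

lemma eps_Suc: "eps (Suc s) (x # I) = eps s I"
  by (simp add: eps_def)

lemma dpair_absorb: "dpair g ((j + k) # J, I) = dpair (\<lambda>y. g (absorb j y)) (k # J, I)"
  by (simp add: dpair_def absorb_def mergeAt_add_hd)

text \<open>A leading f_1 is a cycle: \<partial> only acts on the remaining factors.\<close>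
lemma dpair_cons_f1: "dpair g (j # J, Suc 0 # I) = dpair (\<lambda>y. g (cons_f1 j y)) (J, I)"
  unfolding dpair_def prod.case length_Cons sum.lessThan_Suc_shift
  by (simp add: eps_Suc cons_f1_def mergeAt_Suc splitAt_Suc del: sum.lessThan_Suc)

lemma sum_split_first:
  "(\<Sum>a\<in>{Suc 0..<Suc (Suc i)}. f a) = f (Suc 0) + (\<Sum>a\<in>{Suc 0..<Suc i}. (f (Suc a) :: 'a::comm_ring_1))"
  using sum.atLeast_Suc_lessThan[of "Suc 0" "Suc (Suc i)" f] sum.shift_bounds_Suc_ivl[of f "Suc 0" "Suc i"]
  by simp

text \<open>For a leading f_(i+2), \<partial> consists of the two terms merging its first two inputs and
  splitting off f_1 in front, plus the widened terms of \<partial> applied to f_(i+1).\<close>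
lemma dpair_widen:
  "dpair g (j # k # J, Suc (Suc i) # I) =
     dsign (Suc i # I) * (g ((j + k) # J, Suc i # I) - g (j # k # J, Suc 0 # Suc i # I))
     + dpair (\<lambda>y. g (widen j y)) (k # J, Suc i # I)"
  unfolding dpair_def prod.case length_Cons sum.lessThan_Suc_shift
  by (simp only: nth_Cons_0 diff_Suc_1 One_nat_def sum_split_first sum.lessThan_Suc_shift,
      simp add: eps_Suc widen_def mergeAt_Suc splitAt_Suc mergeAt_Cons0 splitAt_0
        del: sum.lessThan_Suc sum.op_ivl_Suc,
      simp only: sum.lessThan_Suc_shift,
      simp add: dsign_def eps_def power_add algebra_simps mergeAt_Cons0 mergeAt_Suc
        del: sum.lessThan_Suc sum.op_ivl_Suc)

lemma dpair_unit: "dpair g ([N], [Suc 0]) = 0"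
  by (simp add: dpair_def)

lemma F1basis_cases:
  assumes "(J, I) \<in> F1basis N"
  obtains (unit) j where "J = [j]" "I = [Suc 0]" "N = j" "1 \<le> j"
  | (f1) j k J' i I' where "J = j # k # J'" "I = Suc 0 # i # I'"
      "(k # J', i # I') \<in> F1basis (N - j)" "1 \<le> j" "j \<le> N"
  | (wide) j k J' i I' where "J = j # k # J'" "I = Suc (Suc i) # I'"
      "(k # J', Suc i # I') \<in> F1basis (N - j)" "1 \<le> j" "j \<le> N"
proof -
  have J1: "\<forall>j\<in>set J. 1 \<le> j" and sJ: "sum_list J = N" and In: "I \<noteq> []"
    and I1: "\<forall>i\<in>set I. 1 \<le> i" and sI: "sum_list I = length J"
    using assms by (auto simp: F1basis_def)
  obtain i0 I0 where I: "I = i0 # I0" using In by (cases I) auto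
  have "J \<noteq> []" using sI I I1 by auto
  then obtain j J0 where J: "J = j # J0" by (cases J) auto
  show ?thesis
  proof (cases J0)
    case Nil
    hence "sum_list I = 1" using sI J by simp
    hence "I = [Suc 0]" using I I1 by (cases I0) auto
    thus ?thesis using unit J Nil sJ J1 by simp
  next
    case (Cons k J')
    show ?thesis
    proof (cases "i0 = Suc 0")
      case True
      have "I0 \<noteq> []" using sI I J Cons True by auto
      then obtain i I' where I0: "I0 = i # I'" by (cases I0) auto
      have "(k # J', i # I') \<in> F1basis (N - j)"
        using J1 sJ I1 sI unfolding F1basis_def I I0 J Cons True by simp
      thus ?thesis using f1[of j k J' i I'] J Cons I I0 True J1 sJ by auto
    next
      case False
      have "i0 \<ge> 2" using I I1 False by auto
      then obtain i where i0: "i0 = Suc (Suc i)" by (metis add_2_eq_Suc le_add_diff_inverse)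
      have "(k # J', Suc i # I0) \<in> F1basis (N - j)"
        using J1 sJ I1 sI unfolding F1basis_def I i0 J Cons by simp
      thus ?thesis using wide[of j k J' i I0] J Cons I i0 J1 sJ by auto
    qed
  qed
qed

lemma F1basis_head:
  assumes "b \<in> F1basis N"
  obtains k J i I where "b = (k # J, Suc i # I)" "1 \<le> k"
proof -
  obtain J I where b: "b = (J, I)" by (cases b)
  from assms[unfolded b] show ?thesis
  proof (cases rule: F1basis_cases)
    case (unit j) thus ?thesis using that b by simp
  next
    case (f1 j k J' i I') thus ?thesis using that b by simp
  next
    case (wide j k J' i I') thus ?thesis using that b by simp
  qed
qed

lemma F1basis_arity_pos:
  assumes "b \<in> F1basis N"
  shows "1 \<le> N"
proof -
  obtain k J i I where "b = (k # J, Suc i # I)" "1 \<le> k" using F1basis_head[OF assms] .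
  thus ?thesis using assms by (auto simp: F1basis_def)
qed

lemma dterms_cases:
  assumes "y \<in> dterms (J, I)"
  obtains (merge) s r where "s < length I" "r < I ! s - 1"
      "y = (mergeAt (sum_list (take s I) + r) J, I[s := I ! s - 1])"
  | (split) s a where "s < length I" "1 \<le> a" "a < I ! s" "y = (J, splitAt s a (I ! s - a) I)"
  using assms by (auto simp: dterms_def)

lemma I_expand: "s < length I \<Longrightarrow> I = take s I @ I ! s # drop (Suc s) I"
  by (simp add: id_take_nth_drop)

lemma sum_expand:
  "s < length I \<Longrightarrow> sum_list (I::nat list) = sum_list (take s I) + I ! s + sum_list (drop (Suc s) I)"
  by (metis I_expand add.assoc sum_list.Cons sum_list_append)

lemma mergeAt_props:
  assumes "Suc p < length J"
  shows "sum_list (mergeAt p J) = sum_list J" "length (mergeAt p J) = length J - 1"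
    "\<forall>x\<in>set J. 1 \<le> x \<Longrightarrow> \<forall>x\<in>set (mergeAt p J). (1::nat) \<le> x"
proof -
  have J: "J = take p J @ J ! p # J ! Suc p # drop (Suc (Suc p)) J"
    using assms by (metis Cons_nth_drop_Suc Suc_lessD append_take_drop_id)
  have m: "mergeAt p J = take p J @ (J ! p + J ! Suc p) # drop (Suc (Suc p)) J"
    by (simp add: mergeAt_def numeral_2_eq_2)
  show "sum_list (mergeAt p J) = sum_list J"
    by (subst (2) J) (simp add: m)
  show "length (mergeAt p J) = length J - 1"
    using assms by (simp add: m)
  assume h: "\<forall>x\<in>set J. 1 \<le> x"
  have "1 \<le> J ! p" using h assms by simp
  thus "\<forall>x\<in>set (mergeAt p J). 1 \<le> x"
    using h by (auto simp: m dest: in_set_takeD in_set_dropD)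
qed

lemma splitAt_expand: "splitAt s a b I = take s I @ a # b # drop (Suc s) I"
  by (simp add: splitAt_def)

lemma dterms_F1basis:
  assumes b: "b \<in> F1basis N"
  shows "dterms b \<subseteq> F1basis N"
proof
  fix y assume y: "y \<in> dterms b"
  obtain J I where bJI: "b = (J, I)" by (cases b)
  have J1: "\<forall>j\<in>set J. 1 \<le> j" and sJ: "sum_list J = N" and In: "I \<noteq> []"
    and I1: "\<forall>i\<in>set I. 1 \<le> i" and sI: "sum_list I = length J"
    using b by (auto simp: F1basis_def bJI)
  from y[unfolded bJI] show "y \<in> F1basis N"
  proof (cases rule: dterms_cases)
    case (merge s r)
    have p: "Suc (sum_list (take s I) + r) < length J"
      using sum_expand[OF merge(1)] merge(2) sI by linarith
    have u: "sum_list (I[s := I ! s - 1]) = sum_list I - 1"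
      using merge by (simp add: upd_conv_take_nth_drop sum_expand[of s I])
    have "\<forall>i\<in>set (I[s := I ! s - 1]). 1 \<le> i"
      using I1 merge(2) by (auto dest!: set_update_subset_insert[THEN subsetD])
    thus ?thesis
      using mergeAt_props[OF p] J1 sJ u sI In by (simp add: F1basis_def merge(3))
  next
    case (split s a)
    have "sum_list (splitAt s a (I ! s - a) I) = sum_list I"
      using split by (simp add: splitAt_expand sum_expand[of s I])
    moreover have "\<forall>i\<in>set (splitAt s a (I ! s - a) I). 1 \<le> i"
      using I1 split by (auto simp: splitAt_expand dest: in_set_takeD in_set_dropD)
    ultimately show ?thesis
      using J1 sJ sI by (simp add: F1basis_def split(4) splitAt_expand)
  qed
qed

text \<open>The differential has degree +1, so every term of \<partial>b has the opposite sign.\<close>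
lemma neg_pow_pred: "Suc 0 \<le> n \<Longrightarrow> (-1::'a::comm_ring_1) ^ (n - Suc 0) = - ((-1) ^ n)"
  by (cases n) auto

lemma dsign_dterms:
  assumes y: "y \<in> dterms b"
  shows "(dsign (snd y) :: 'a::comm_ring_1) = - dsign (snd b)"
proof -
  obtain J I where bJI: "b = (J, I)" by (cases b)
  let ?e = "\<lambda>I. sum_list (map (\<lambda>i::nat. i - 1) I)"
  have S: "?e I = ?e (take s I) + (I ! s - 1) + ?e (drop (Suc s) I)" if "s < length I" for s
    by (subst I_expand[OF that]) simp
  have "?e (snd y) = ?e I - 1 \<and> ?e I \<ge> 1"
    using y[unfolded bJI]
  proof (cases rule: dterms_cases)
    case (merge s r)
    have "?e (snd y) = ?e (take s I) + (I ! s - 1 - 1) + ?e (drop (Suc s) I)"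
      using merge by (simp add: upd_conv_take_nth_drop)
    thus ?thesis using S[OF merge(1)] merge(2) by linarith
  next
    case (split s a)
    have "?e (snd y) = ?e (take s I) + (a - 1) + (I ! s - a - 1) + ?e (drop (Suc s) I)"
      using split by (simp add: splitAt_expand)
    thus ?thesis using S[OF split(1)] split(2,3) by linarith
  qed
  thus ?thesis by (simp add: bJI dsign_def neg_pow_pred)
qed

section \<open>p annihilates boundaries\<close>

text \<open>Dual form of p\<partial> = 0: pairing \<partial>b with the pullback along p of a test function
  \<psi> on As gives 0.  For a leading f_1 this reduces to the remaining factors; for a
  leading f_(i+2) the two leading terms of \<partial>b cancel and all other terms are killed by p.\<close>
lemma dpair_p_pullback:
  assumes "b \<in> F1basis N"
  shows "dpair (\<lambda>y. if \<forall>i\<in>set (snd y). i = 1 then \<psi> (sum_list (fst y)) else (0::'a::comm_ring_1)) b = 0"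
  using assms
proof (induction "length (fst b)" arbitrary: b N \<psi> rule: less_induct)
  case less
  obtain J I where b: "b = (J, I)" by (cases b)
  from less.prems[unfolded b] show ?case
  proof (cases rule: F1basis_cases)
    case (unit j)
    then show ?thesis by (simp add: b dpair_unit)
  next
    case (f1 j k J' i I')
    have "(\<lambda>y. if \<forall>i\<in>set (snd (cons_f1 j y)). i = 1 then \<psi> (sum_list (fst (cons_f1 j y))) else (0::'a))
       = (\<lambda>y. if \<forall>i\<in>set (snd y). i = 1 then \<psi> (j + sum_list (fst y)) else 0)"
      unfolding cons_f1_def by (simp cong: if_cong)
    thus ?thesis
      using less(1)[of "(k # J', i # I')" "N - j" "\<lambda>s. \<psi> (j + s)"] f1
      by (simp add: b dpair_cons_f1 del: One_nat_def)
  next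
    case (wide j k J' i I')
    let ?c = "(k # J', Suc i # I')"
    have "dpair (\<lambda>y. if \<forall>i\<in>set (snd (widen j y)). i = 1 then \<psi> (sum_list (fst (widen j y))) else (0::'a)) ?c
        = dpair (\<lambda>y. 0) ?c"
    proof (rule dpair_cong)
      fix y assume "y \<in> dterms ?c"
      then obtain k2 J2 i2 I2 where y: "y = (k2 # J2, Suc i2 # I2)"
        using dterms_F1basis[OF wide(3)] by (blast elim: F1basis_head)
      show "(if \<forall>i\<in>set (snd (widen j y)). i = 1 then \<psi> (sum_list (fst (widen j y))) else (0::'a)) = 0"
        by (simp add: y widen_def)
    qed
    thus ?thesis using wide by (simp add: b dpair_widen dpair_zero add.assoc del: One_nat_def)
  qed
qed

section \<open>The contracting homotopy\<close>

text \<open>The homotopy h as a list of weighted terms: on a basis element whose leading factors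
  are f_1 (x) f_i it produces f_(i+1) (with sign) and then recurses on the remaining
  factors, the input of the leading f_1 being absorbed into the next input; on all other
  basis elements it vanishes.\<close>
fun hterms :: "nat list \<times> nat list \<Rightarrow> ('a::comm_ring_1 \<times> (nat list \<times> nat list)) list" where
  "hterms (j # k # J, Suc 0 # i # I) =
     (dsign (i # I), (j # k # J, Suc i # I)) # map (\<lambda>(r, y). (r, absorb j y)) (hterms (k # J, i # I))"
| "hterms _ = []"

definition h_eval :: "(nat list \<times> nat list \<Rightarrow> 'a::comm_ring_1) \<Rightarrow> nat list \<times> nat list \<Rightarrow> 'a" where
  "h_eval \<phi> b = (\<Sum>(r, y)\<leftarrow>hterms b. r * \<phi> y)"

text \<open>dh_eval \<phi> b pairs (\<partial>h + h\<partial>)(b) with \<phi>.\<close>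
definition dh_eval :: "(nat list \<times> nat list \<Rightarrow> 'a::comm_ring_1) \<Rightarrow> nat list \<times> nat list \<Rightarrow> 'a" where
  "dh_eval \<phi> b = (\<Sum>(r, y)\<leftarrow>hterms b. r * dpair \<phi> y) + dpair (h_eval \<phi>) b"

lemma h_eval_f1: "h_eval \<phi> (j # k # J, Suc 0 # i # I) =
   dsign (i # I) * \<phi> (j # k # J, Suc i # I) + h_eval (\<lambda>y. \<phi> (absorb j y)) (k # J, i # I)"
  by (simp add: h_eval_def fsum_map_snd del: map_map)

lemma hterms_wide: "hterms (J, Suc (Suc i) # I) = []"
  by (cases "(J, Suc (Suc i) # I)" rule: hterms.cases) auto

lemma hterms_unit: "hterms ([j], I) = []"
  by (cases "([j], I)" rule: hterms.cases) auto

lemma add_hd_add_hd: "add_hd j (add_hd k xs) = add_hd (j + k) xs"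
  by (cases xs) auto

lemma hterms_absorb:
  "(hterms (absorb j (k # J, I)) :: ('a::comm_ring_1 \<times> _) list) =
     map (\<lambda>(r, y). (r, absorb j y)) (hterms (k # J, I))"
proof (cases "\<exists>k2 J' i I'. J = k2 # J' \<and> I = Suc 0 # i # I'")
  case True
  then obtain k2 J' i I' where e: "J = k2 # J'" "I = Suc 0 # i # I'" by blast
  show ?thesis by (simp add: e absorb_def o_def case_prod_beta add_hd_add_hd[symmetric] add.commute)
next
  case False
  have "(hterms (k # J, I) :: ('a \<times> _) list) = []" using False
    by (cases "(k # J, I)" rule: hterms.cases) auto
  moreover have "(hterms (absorb j (k # J, I)) :: ('a \<times> _) list) = []" using False
    by (cases "absorb j (k # J, I)" rule: hterms.cases) (auto simp: absorb_def)
  ultimately show ?thesis by simp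
qed

lemma h_eval_absorb: "h_eval \<phi> (absorb j (k # J, I)) = h_eval (\<lambda>y. \<phi> (absorb j y)) (k # J, I)"
  by (simp add: h_eval_def hterms_absorb fsum_map_snd del: map_map)

text \<open>All terms of h(b) have an input, so the recursion equation dpair_absorb applies.\<close>
lemma hterms_inputs: "p \<in> set (hterms b) \<Longrightarrow> fst (snd p) \<noteq> []"
proof (induction b arbitrary: p rule: hterms.induct)
  case (1 j k J i I)
  thus ?case by (auto simp: absorb_def, metis add_hd.elims list.distinct(1))
qed auto

lemma dpair_absorb':
  assumes "fst y \<noteq> []"
  shows "dpair \<phi> (absorb j y) = dpair (\<lambda>z. \<phi> (absorb j z)) y"
proof -
  obtain k J I where y: "y = (k # J, I)"
    using assms by (cases y) (auto simp: neq_Nil_conv)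
  thus ?thesis using dpair_absorb[of \<phi> j k J I] by (simp add: absorb_def)
qed

text \<open>Homotopy identity for a leading f_(i+2): here h vanishes on b and on all terms of
  \<partial>b except the one splitting off f_1, which h maps back to -b.\<close>
lemma dh_eval_wide:
  assumes cB: "(k # J, Suc i # I) \<in> F1basis M"
  shows "dh_eval \<phi> (j # k # J, Suc (Suc i) # I) = - (\<phi> (j # k # J, Suc (Suc i) # I) :: 'a::comm_ring_1)"
proof -
  let ?c = "(k # J, Suc i # I)"
  let ?s = "dsign (Suc i # I) :: 'a"
  have "dpair (\<lambda>y. h_eval \<phi> (widen j y)) ?c = dpair (\<lambda>y. 0) ?c"
  proof (rule dpair_cong)
    fix y assume "y \<in> dterms ?c"
    then obtain k2 J2 i2 I2 where y: "y = (k2 # J2, Suc i2 # I2)"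
      using dterms_F1basis[OF cB] by (blast elim: F1basis_head)
    show "h_eval \<phi> (widen j y) = 0" by (simp add: y widen_def h_eval_def hterms_wide)
  qed
  moreover have "h_eval \<phi> ((j + k) # J, Suc i # I) = h_eval (\<lambda>z. \<phi> (absorb j z)) ?c"
    using h_eval_absorb[of \<phi> j k J "Suc i # I"] by (simp add: absorb_def)
  moreover have "h_eval \<phi> (j # k # J, Suc 0 # Suc i # I) =
      ?s * \<phi> (j # k # J, Suc (Suc i) # I) + h_eval (\<lambda>z. \<phi> (absorb j z)) ?c"
    by (rule h_eval_f1)
  ultimately have "dpair (h_eval \<phi>) (j # k # J, Suc (Suc i) # I) = - (?s * ?s) * \<phi> (j # k # J, Suc (Suc i) # I)"
    by (simp add: dpair_widen dpair_zero algebra_simps)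
  thus ?thesis by (simp add: dh_eval_def hterms_wide dsign_sq)
qed

lemma dh_eval_f1:
  fixes \<phi> :: "nat list \<times> nat list \<Rightarrow> 'a::comm_ring_1" and j k i :: nat and J I :: "nat list"
  defines "c \<equiv> (k # J, i # I)"
  assumes cB: "c \<in> F1basis M"
    and IH: "dh_eval (\<lambda>z. \<phi> (absorb j z)) c =
      (if \<forall>i\<in>set (snd c). i = 1 then \<phi> (absorb j ([sum_list (fst c)], [1])) else 0) - \<phi> (absorb j c)"
  shows "dh_eval \<phi> (j # k # J, Suc 0 # i # I) =
    (if \<forall>i\<in>set (i # I). i = 1 then \<phi> ([sum_list (j # k # J)], [1]) else 0) - \<phi> (j # k # J, Suc 0 # i # I)"
proof -
  let ?\<phi>' = "\<lambda>z. \<phi> (absorb j z)"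
  let ?s = "dsign (i # I) :: 'a"
  obtain i0 where i: "i = Suc i0"
    using cB by (cases i) (auto simp: c_def F1basis_def)
  have hterms_dpair: "(\<Sum>(r, y)\<leftarrow>hterms (j # k # J, Suc 0 # i # I). r * dpair \<phi> y) =
      ?s * dpair \<phi> (j # k # J, Suc i # I) + (\<Sum>(r, y)\<leftarrow>hterms c. r * dpair ?\<phi>' y)"
  proof -
    have "(\<Sum>(r, y)\<leftarrow>hterms c. r * dpair \<phi> (absorb j y)) = (\<Sum>(r, y)\<leftarrow>hterms c. r * dpair ?\<phi>' y)"
      by (rule arg_cong[where f=sum_list], rule map_cong[OF refl])
        (auto simp: dpair_absorb' dest: hterms_inputs)
    thus ?thesis by (simp add: c_def fsum_map_snd[where \<phi>="dpair \<phi>"] del: map_map)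
  qed
  have dpair_lead: "dpair \<phi> (j # k # J, Suc i # I) =
      ?s * (\<phi> ((j + k) # J, i # I) - \<phi> (j # k # J, Suc 0 # i # I)) + dpair (\<lambda>y. \<phi> (widen j y)) c"
    using dpair_widen[of \<phi> j k J i0 I] by (simp add: i c_def)
  have dpair_h: "dpair (h_eval \<phi>) (j # k # J, Suc 0 # i # I) =
      - ?s * dpair (\<lambda>y. \<phi> (widen j y)) c + dpair (h_eval ?\<phi>') c"
  proof -
    have "dpair (h_eval \<phi>) (j # k # J, Suc 0 # i # I) = dpair (\<lambda>y. h_eval \<phi> (cons_f1 j y)) c"
      by (simp add: c_def dpair_cons_f1)
    also have "\<dots> = dpair (\<lambda>y. - ?s * \<phi> (widen j y) + h_eval ?\<phi>' y) c"
    proof (rule dpair_cong)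
      fix y assume yT: "y \<in> dterms c"
      then obtain k2 J2 i2 I2 where y: "y = (k2 # J2, Suc i2 # I2)"
        using dterms_F1basis[OF cB] by (blast elim: F1basis_head)
      have "dsign (snd y) = - ?s" using dsign_dterms[OF yT] by (simp add: c_def)
      thus "h_eval \<phi> (cons_f1 j y) = - ?s * \<phi> (widen j y) + h_eval ?\<phi>' y"
        by (simp add: y cons_f1_def widen_def h_eval_f1)
    qed
    also have "\<dots> = - ?s * dpair (\<lambda>y. \<phi> (widen j y)) c + dpair (h_eval ?\<phi>') c"
      by (subst dpair_add, subst dpair_cmult) (rule refl)
    finally show ?thesis .
  qed
  have "dh_eval \<phi> (j # k # J, Suc 0 # i # I) =
      ?s * ?s * (\<phi> ((j + k) # J, i # I) - \<phi> (j # k # J, Suc 0 # i # I)) + dh_eval ?\<phi>' c"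
    unfolding dh_eval_def hterms_dpair dpair_lead dpair_h by (simp add: algebra_simps)
  thus ?thesis unfolding IH dsign_sq by (simp add: c_def absorb_def)
qed

text \<open>The homotopy identity (\<partial>h + h\<partial>)(b) = beta(p(b)) - b on every basis element, in dual
  form; beta(p(b)) is the unit element with the same arity if all factors of b are
  f_1, and 0 otherwise.\<close>
lemma dh_eval_F1basis:
  assumes "b \<in> F1basis N"
  shows "dh_eval \<phi> b =
    (if \<forall>i\<in>set (snd b). i = 1 then \<phi> ([sum_list (fst b)], [1]) else 0) - (\<phi> b :: 'a::comm_ring_1)"
  using assms
proof (induction "length (fst b)" arbitrary: b N \<phi> rule: less_induct)
  case less
  obtain J I where b: "b = (J, I)" by (cases b)
  from less.prems[unfolded b] show ?case
  proof (cases rule: F1basis_cases)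
    case (unit j)
    then show ?thesis by (simp add: b dh_eval_def hterms_unit dpair_def)
  next
    case (f1 j k J' i I')
    thus ?thesis using less(1)[of "(k # J', i # I')" "N - j" "\<lambda>z. \<phi> (absorb j z)"]
      by (simp add: b dh_eval_f1[of k J' i I' "N - j"])
  next
    case (wide j k J' i I')
    thus ?thesis by (simp add: b dh_eval_wide)
  qed
qed

definition F1deg :: "nat list \<times> nat list \<Rightarrow> int" where
  "F1deg b = int (length (snd b)) - int (sum_list (snd b))"

lemma hterms_F1basis:
  assumes "b \<in> F1basis N" "p \<in> set (hterms b)"
  shows "snd p \<in> F1basis N \<and> F1deg (snd p) = F1deg b - 1"
  using assms
proof (induction b arbitrary: N p rule: hterms.induct)
  case (1 j k J i I)
  let ?c = "(k # J, i # I)"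
  have b: "(j # k # J, Suc 0 # i # I) \<in> F1basis N" by fact
  have cB: "?c \<in> F1basis (N - j)" and jN: "j \<le> N" "1 \<le> j"
    using b by (auto simp: F1basis_def)
  from "1.prems"(2) consider "p = (dsign (i # I), (j # k # J, Suc i # I))"
    | q where "q \<in> set (hterms ?c)" "p = (fst q, absorb j (snd q))"
    by auto
  thus ?case
  proof cases
    case 1
    thus ?thesis using b by (auto simp: F1basis_def F1deg_def)
  next
    case (2 q)
    have IH: "snd q \<in> F1basis (N - j) \<and> F1deg (snd q) = F1deg ?c - 1"
      using "1.IH"[OF cB 2(1)] .
    then obtain k2 J2 i2 I2 where y: "snd q = (k2 # J2, Suc i2 # I2)"
      by (blast elim: F1basis_head)
    have "absorb j (snd q) \<in> F1basis N" using IH jN by (auto simp: y absorb_def F1basis_def)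
    moreover have "F1deg (absorb j (snd q)) = F1deg (j # k # J, Suc 0 # i # I) - 1"
      using IH by (simp add: absorb_def F1deg_def)
    ultimately show ?thesis using 2 by simp
  qed
qed auto

definition F1act :: "nat list \<Rightarrow> nat list \<times> nat list \<Rightarrow> nat list \<times> nat list" where
  "F1act as b = (blocks as (fst b), snd b)"

lemma blocks_add_hd: "blocks as (add_hd j J) = add_hd (sum_list (take j as)) (blocks (drop j as) J)"
proof (cases J)
  case (Cons a J')
  have "drop a (drop j as) = drop (j + a) as" by (simp add: add.commute)
  thus ?thesis using Cons by (simp add: take_add)
qed simp

lemma F1act_absorb: "F1act as (absorb j y) = absorb (sum_list (take j as)) (F1act (drop j as) y)"
  by (simp add: F1act_def absorb_def blocks_add_hd)

lemma hterms_act: "hterms (F1act as b) = map (\<lambda>(r, y). (r, F1act as y)) (hterms b)"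
proof (induction b arbitrary: as rule: hterms.induct)
  case (1 j k J i I)
  let ?R = "blocks (drop k (drop j as)) J"
  let ?s1 = "sum_list (take j as)" and ?s2 = "sum_list (take k (drop j as))"
  have act: "F1act as (j # k # J, Suc 0 # i # I) = (?s1 # ?s2 # ?R, Suc 0 # i # I)"
    "F1act as (j # k # J, Suc i # I) = (?s1 # ?s2 # ?R, Suc i # I)"
    by (simp_all add: F1act_def)
  have hterms_act: "(hterms (F1act as (j # k # J, Suc 0 # i # I)) :: ('a \<times> _) list) =
      (dsign (i # I), (?s1 # ?s2 # ?R, Suc i # I)) # map (\<lambda>(r, y). (r, absorb ?s1 y)) (hterms (?s2 # ?R, i # I))"
    unfolding act by (rule hterms.simps(1))
  have IH: "(hterms (?s2 # ?R, i # I) :: ('a \<times> _) list) =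
      map (\<lambda>(r, y). (r, F1act (drop j as) y)) (hterms (k # J, i # I))"
    using "1.IH"[of "drop j as"] by (simp add: F1act_def)
  show ?case
    unfolding hterms_act IH by (simp add: act F1act_absorb case_prod_beta)
qed (auto simp: F1act_def)

definition p_basis :: "nat list \<times> nat list \<Rightarrow> nat \<Rightarrow> 'a::comm_ring_1" where
  "p_basis = (\<lambda>(J, I) N. if (\<forall>i\<in>set I. i = 1) \<and> N = sum_list J then 1 else 0)"

definition beta_basis :: "nat \<Rightarrow> nat list \<times> nat list \<Rightarrow> 'a::comm_ring_1" where
  "beta_basis = (\<lambda>N b. if b = ([N], [1]) then 1 else 0)"

definition h_basis :: "nat list \<times> nat list \<Rightarrow> nat list \<times> nat list \<Rightarrow> 'a::comm_ring_1" where
  "h_basis b = fsum (hterms b)"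

lemma pmap_eq: "(pmap :: nat \<Rightarrow> (nat list \<times> nat list \<Rightarrow> 'a::comm_ring_1) \<Rightarrow> nat \<Rightarrow> 'a) = (\<lambda>n. lin_ext p_basis)"
  by (rule ext) (simp add: pmap_def p_basis_def)

lemma betamap_eq: "(betamap :: nat \<Rightarrow> (nat \<Rightarrow> 'a::comm_ring_1) \<Rightarrow> nat list \<times> nat list \<Rightarrow> 'a) = (\<lambda>n. lin_ext beta_basis)"
  by (rule ext) (simp add: betamap_def beta_basis_def)

lemma F1Mod_simps:
  "bas F1Mod = F1basis" "dg F1Mod = F1deg" "actb F1Mod = F1act" "difb F1Mod = F1difb"
  by (simp_all add: F1Mod_def F1deg_def F1act_def fun_eq_iff split: prod.split)

lemma AsMod_simps:
  "bas AsMod = (\<lambda>N. if 1 \<le> N then {N} else {})" "dg AsMod = (\<lambda>_. 0)"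
  "actb AsMod = (\<lambda>as N. sum_list as)" "difb AsMod = (\<lambda>_ _. 0)"
  by (simp_all add: AsMod_def)

lemma p_basis_cases:
  "p_basis (J, I) = (if \<forall>i\<in>set I. i = 1 then (\<lambda>N. if N = sum_list J then 1 else 0) else (\<lambda>N. 0))"
  by (simp add: p_basis_def fun_eq_iff)

lemma supp_p_basis: "supp (p_basis b) \<subseteq> {sum_list (fst b)}"
  by (cases b) (auto simp: p_basis_def supp_def)

lemma supp_beta_basis: "supp (beta_basis N) \<subseteq> {([N], [1])}"
  by (auto simp: beta_basis_def supp_def)

lemma finite_supp_p_basis: "finite (supp (p_basis b))"
  by (rule finite_subset[OF supp_p_basis]) simp

lemma finite_supp_beta_basis: "finite (supp (beta_basis N))"
  by (rule finite_subset[OF supp_beta_basis]) simp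

lemma sum_blocks: "sum_list (blocks as J) = sum_list (take (sum_list J) as)"
  by (induction J arbitrary: as) (simp_all add: take_add)

lemma sum_list_all_ones: "\<forall>i\<in>set I. i = 1 \<Longrightarrow> sum_list I = length (I::nat list)"
  by (induction I) auto

lemma p_lmod: "is_lmod_map (F1Mod :: (nat list \<times> nat list, 'a::comm_ring_1) dgmod) AsMod 0 (\<lambda>n. lin_ext p_basis)"
proof (rule is_lmod_map_lin_ext)
  fix n and b :: "nat list \<times> nat list"
  assume b: "b \<in> bas (F1Mod :: (_, 'a) dgmod) n"
  obtain J I where bJI: "b = (J, I)" by (cases b)
  have bB: "(J, I) \<in> F1basis n" using b bJI by (simp add: F1Mod_simps)
  have sJ: "sum_list J = n" using bB by (simp add: F1basis_def)
  have sp: "supp (p_basis b :: nat \<Rightarrow> 'a) \<subseteq> {n}" using supp_p_basis[of b] by (simp add: bJI sJ)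
  show "finite (supp (p_basis b :: nat \<Rightarrow> 'a))" by (rule finite_supp_p_basis)
  show "supp (p_basis b :: nat \<Rightarrow> 'a) \<subseteq> bas (AsMod :: (_, 'a) dgmod) n"
    using sp F1basis_arity_pos[OF bB] by (simp add: AsMod_simps)
  show "supp (p_basis b :: nat \<Rightarrow> 'a) \<subseteq> {c. dg (AsMod :: (_, 'a) dgmod) c = dg (F1Mod :: (_, 'a) dgmod) b + 0}"
  proof
    fix c assume "c \<in> supp (p_basis b :: nat \<Rightarrow> 'a)"
    hence "\<forall>i\<in>set I. i = 1" by (auto simp: bJI p_basis_def supp_def split: if_splits)
    thus "c \<in> {c. dg (AsMod :: (_, 'a) dgmod) c = dg (F1Mod :: (_, 'a) dgmod) b + 0}"
      by (simp add: AsMod_simps F1Mod_simps F1deg_def bJI sum_list_all_ones)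
  qed
  fix as :: "nat list" assume las: "length as = n"
  have sb: "sum_list (blocks as J) = sum_list as" using las sJ by (simp add: sum_blocks)
  show "p_basis (actb (F1Mod :: (_, 'a) dgmod) as b) = lact (AsMod :: (_, 'a) dgmod) as (p_basis b)"
  proof (cases "\<forall>i\<in>set I. i = 1")
    case True
    have "lact (AsMod :: (_, 'a) dgmod) as (p_basis b) = (\<lambda>c. if sum_list as = c then 1 else 0)"
      using True by (simp add: AsMod_simps bJI p_basis_cases lact_def lin_ext_delta)
    moreover have "p_basis (actb (F1Mod :: (_, 'a) dgmod) as b) = (\<lambda>N. if N = sum_list as then 1 else (0::'a))"
      using True by (simp add: F1Mod_simps F1act_def bJI p_basis_cases sb)
    ultimately show ?thesis by auto
  next
    case False
    hence "p_basis b = (\<lambda>N. 0::'a)" "p_basis (actb (F1Mod :: (_, 'a) dgmod) as b) = (\<lambda>N. 0::'a)"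
      by (auto simp: bJI p_basis_def F1Mod_simps F1act_def fun_eq_iff)
    thus ?thesis by (simp add: lact_def lin_ext_zero)
  qed
qed

lemma beta_lmod: "is_lmod_map (AsMod :: (nat, 'a::comm_ring_1) dgmod) F1Mod 0 (\<lambda>n. lin_ext beta_basis)"
proof (rule is_lmod_map_lin_ext)
  fix n and b :: nat
  assume "b \<in> bas (AsMod :: (_, 'a) dgmod) n"
  hence bn: "b = n" "1 \<le> n" by (auto simp: AsMod_simps split: if_splits)
  show "finite (supp (beta_basis b :: _ \<Rightarrow> 'a))" by (rule finite_supp_beta_basis)
  show "supp (beta_basis b :: _ \<Rightarrow> 'a) \<subseteq> bas (F1Mod :: (_, 'a) dgmod) n"
    using supp_beta_basis[of b] bn by (auto simp: F1Mod_simps F1basis_def)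
  show "supp (beta_basis b :: _ \<Rightarrow> 'a) \<subseteq> {c. dg (F1Mod :: (_, 'a) dgmod) c = dg (AsMod :: (_, 'a) dgmod) b + 0}"
    using supp_beta_basis[of b] by (auto simp: F1Mod_simps AsMod_simps F1deg_def)
  fix as :: "nat list" assume "length as = n"
  thus "beta_basis (actb (AsMod :: (_, 'a) dgmod) as b) = lact (F1Mod :: (_, 'a) dgmod) as (beta_basis b)"
    by (simp add: F1Mod_simps AsMod_simps F1act_def bn lact_def beta_basis_def lin_ext_delta eq_commute)
qed

lemma h_lmod: "is_lmod_map (F1Mod :: (nat list \<times> nat list, 'a::comm_ring_1) dgmod) F1Mod (-1) (\<lambda>n. lin_ext h_basis)"
proof (rule is_lmod_map_lin_ext)
  fix n and b :: "nat list \<times> nat list"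
  assume "b \<in> bas (F1Mod :: (_, 'a) dgmod) n"
  hence bB: "b \<in> F1basis n" by (simp add: F1Mod_simps)
  show "finite (supp (h_basis b :: _ \<Rightarrow> 'a))" by (simp add: h_basis_def finite_supp_fsum)
  have sp: "supp (h_basis b :: _ \<Rightarrow> 'a) \<subseteq> snd ` set (hterms b :: ('a \<times> _) list)"
    by (simp add: h_basis_def supp_fsum)
  show "supp (h_basis b :: _ \<Rightarrow> 'a) \<subseteq> bas (F1Mod :: (_, 'a) dgmod) n"
    using sp hterms_F1basis[OF bB] by (force simp: F1Mod_simps)
  show "supp (h_basis b :: _ \<Rightarrow> 'a) \<subseteq> {c. dg (F1Mod :: (_, 'a) dgmod) c = dg (F1Mod :: (_, 'a) dgmod) b + -1}"
    using sp hterms_F1basis[OF bB] by (force simp: F1Mod_simps)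
  fix as :: "nat list"
  show "h_basis (actb (F1Mod :: (_, 'a) dgmod) as b) = lact (F1Mod :: (_, 'a) dgmod) as (h_basis b)"
  proof
    fix c
    have "h_basis (actb (F1Mod :: (_, 'a) dgmod) as b) c = (\<Sum>(r, y)\<leftarrow>hterms b. r * (if c = F1act as y then 1 else (0::'a)))"
      by (simp add: F1Mod_simps h_basis_def hterms_act fsum_def
          fsum_map_snd[where \<phi>="\<lambda>y. if c = y then 1 else 0"] del: map_map)
    also have "\<dots> = lact (F1Mod :: (_, 'a) dgmod) as (h_basis b) c"
      by (simp add: lact_def h_basis_def lin_ext_fsum F1Mod_simps eq_commute)
    finally show "h_basis (actb (F1Mod :: (_, 'a) dgmod) as b) c = lact (F1Mod :: (_, 'a) dgmod) as (h_basis b) c" .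
  qed
qed

text \<open>p and beta commute with the differentials: p\<partial> = 0 and \<partial>(f_1) = 0.\<close>
lemma p_closed: "closed_map (F1Mod :: (nat list \<times> nat list, 'a::comm_ring_1) dgmod) AsMod pmap"
  unfolding pmap_eq
proof (rule closed_map_lin_ext[OF p_lmod finite_supp_p_basis])
  fix n and b :: "nat list \<times> nat list"
  assume "b \<in> bas (F1Mod :: (_, 'a) dgmod) n"
  hence bB: "b \<in> F1basis n" by (simp add: F1Mod_simps)
  show "finite (supp (difb (F1Mod :: (_, 'a) dgmod) b))"
    by (simp add: F1Mod_simps finite_supp_F1difb)
  show "lin_ext (difb AsMod) (p_basis b) = (lin_ext p_basis (difb F1Mod b) :: nat \<Rightarrow> 'a)"
  proof
    fix c
    have "(\<lambda>y. p_basis y c :: 'a) =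
        (\<lambda>y. if \<forall>i\<in>set (snd y). i = 1 then (\<lambda>s. if c = s then 1 else 0) (sum_list (fst y)) else 0)"
      by (auto simp: p_basis_def)
    hence "lin_ext p_basis (F1difb b) c = (0::'a)"
      using dpair_p_pullback[OF bB] by (simp only: lin_ext_F1difb)
    thus "lin_ext (difb AsMod) (p_basis b) c = (lin_ext p_basis (difb F1Mod b) c :: 'a)"
      by (simp add: AsMod_simps F1Mod_simps lin_ext_zero_fun)
  qed
qed

lemma beta_closed: "closed_map (AsMod :: (nat, 'a::comm_ring_1) dgmod) F1Mod betamap"
  unfolding betamap_eq
proof (rule closed_map_lin_ext[OF beta_lmod finite_supp_beta_basis])
  fix n and N :: nat
  show "finite (supp (difb (AsMod :: (_, 'a) dgmod) N))" by (simp add: AsMod_simps supp_def)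
  have "lin_ext F1difb (beta_basis N) = F1difb ([N], [1])"
    by (simp add: beta_basis_def lin_ext_delta)
  also have "\<dots> = (\<lambda>c. 0::'a)"
    by (simp add: fun_eq_iff F1difb_dpair dpair_unit)
  finally show "lin_ext (difb F1Mod) (beta_basis N) = (lin_ext beta_basis (difb AsMod N) :: _ \<Rightarrow> 'a)"
    by (simp add: AsMod_simps F1Mod_simps lin_ext_zero)
qed

text \<open>beta then p is the identity of As: m^(N) goes to the unit element ([N], [1]),
  which p sends back to m^(N).\<close>
lemma beta_p_id:
  assumes "x \<in> elems (bas (AsMod :: (nat, 'a::comm_ring_1) dgmod) n)"
  shows "comp_map betamap pmap n x = (idmap n x :: nat \<Rightarrow> 'a)"
proof -
  have fx: "finite (supp x)" using assms by (simp add: elems_def)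
  have "lin_ext p_basis (lin_ext beta_basis x) = lin_ext (\<lambda>N. lin_ext p_basis (beta_basis N)) x"
    using fx finite_supp_beta_basis by (intro lin_ext_comp) auto
  also have "\<dots> = lin_ext (\<lambda>b c. if c = b then 1 else 0) x"
    by (rule lin_ext_cong) (simp add: beta_basis_def lin_ext_delta p_basis_def)
  also have "\<dots> = x" by (rule lin_ext_id[OF fx])
  finally show ?thesis by (simp add: comp_map_def idmap_def pmap_eq betamap_eq)
qed

lemma homotopy_basis:
  assumes "b \<in> F1basis n"
  shows "lin_ext beta_basis (p_basis b) c - (if c = b then 1 else 0) =
         lin_ext F1difb (h_basis b) c + (lin_ext h_basis (F1difb b) (c :: nat list \<times> nat list) :: 'a::comm_ring_1)"
proof -
  let ?\<phi> = "\<lambda>z. if c = z then 1 else (0::'a)"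
  have "(\<lambda>y. h_basis y c :: 'a) = h_eval ?\<phi>"
    by (simp add: h_basis_def fsum_def h_eval_def fun_eq_iff)
  hence "lin_ext F1difb (h_basis b) c + lin_ext h_basis (F1difb b) c = dh_eval ?\<phi> b"
    by (simp add: dh_eval_def h_basis_def lin_ext_fsum F1difb_dpair lin_ext_F1difb)
  moreover have "lin_ext beta_basis (p_basis b) c =
      (if \<forall>i\<in>set (snd b). i = 1 then ?\<phi> ([sum_list (fst b)], [1]) else 0)"
    by (cases b) (simp add: p_basis_cases lin_ext_delta lin_ext_zero beta_basis_def)
  ultimately show ?thesis using dh_eval_F1basis[OF assms, of ?\<phi>] by simp
qed

lemma p_beta_homotopic:
  "homotopic (F1Mod :: (nat list \<times> nat list, 'a::comm_ring_1) dgmod) F1Mod (comp_map pmap betamap) idmap"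
proof (rule homotopic_lin_ext[OF h_lmod])
  fix n and b :: "nat list \<times> nat list" and c
  assume "b \<in> bas (F1Mod :: (_, 'a) dgmod) n"
  hence bB: "b \<in> F1basis n" by (simp add: F1Mod_simps)
  show "finite (supp (h_basis b :: _ \<Rightarrow> 'a))" by (simp add: h_basis_def finite_supp_fsum)
  show "finite (supp (difb (F1Mod :: (_, 'a) dgmod) b))" by (simp add: F1Mod_simps finite_supp_F1difb)
  show "lin_ext beta_basis (p_basis b) c - (if c = b then 1 else 0) =
      lin_ext (difb F1Mod) (h_basis b) c + (lin_ext h_basis (difb F1Mod b) c :: 'a)"
    unfolding F1Mod_simps by (rule homotopy_basis[OF bB])
next
  fix n and x :: "nat list \<times> nat list \<Rightarrow> 'a"
  assume "x \<in> elems (bas F1Mod n)"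
  hence fx: "finite (supp x)" by (simp add: elems_def)
  show "comp_map pmap betamap n x = lin_ext (\<lambda>b. lin_ext beta_basis (p_basis b)) x"
    unfolding comp_map_def pmap_eq betamap_eq
    by (rule lin_ext_comp[OF fx]) (simp add: finite_supp_p_basis)
  show "idmap n x = lin_ext (\<lambda>b c. if c = b then 1 else 0) x"
    by (simp add: idmap_def lin_ext_id[OF fx])
qed

theorem mainTheorem5:
  shows "closed_map (F1Mod :: (nat list \<times> nat list, 'a::comm_ring_1) dgmod) AsMod pmap
       \<and> closed_map (AsMod :: (nat, 'a) dgmod) F1Mod betamap
       \<and> (\<forall>n. \<forall>x\<in>elems (bas (AsMod :: (nat, 'a) dgmod) n).
              comp_map betamap pmap n x = (idmap n x :: nat \<Rightarrow> 'a))
       \<and> homotopic (F1Mod :: (nat list \<times> nat list, 'a) dgmod) F1Mod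
              (comp_map pmap betamap) idmap"
  using p_closed beta_closed beta_p_id p_beta_homotopic by blast

end
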